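(* Let $n\mid(q-1)$, let $r\ge1$, $\delta\ge2$ be integers with $(r+\delta-1)\mid n$, put $\nu=n/(r+\delta-1)$, and let $b$ be a positive integer with $\gcd(b,n)=1$. Let $B=\{1,\alpha^{b},\alpha^{2b},\dots,\alpha^{(\delta-2)b}\}$ and $$A=\{\alpha^{t},\alpha^{t+b},\dots,\alpha^{t+(\ell(r+\delta-1)+i)b}\}\cup\{\alpha^{t+((\ell+e)(r+\delta-1)+j)b}: e=1,2,\dots,\nu-\ell-1\},$$ where $0\le t\le n-1$, $0\le i\le r-1$, and $\ell,j$ satisfy either ($0\le\ell\le\nu-3$ and $0\le j\le i$) or ($\ell=\nu-2$ and $j=i$). Then $C_{AB}$ is an optimal cyclic $(r,\delta)$-LRC of length $n$ over $\mathbb{F}_q$ with dimension $(\nu-\ell)r-i$ and minimum distance $\delta+i+\ell(r+\delta-1)$.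
   Context: Let $q$ be a prime power and $n\mid(q-1)$, so the set $R_n$ of all $n$-th roots of unity lies in $\mathbb{F}_q$; let $\alpha\in\mathbb{F}_q$ be a primitive $n$-th root of unity. For $A,B\subseteq R_n$, $AB=\{\beta\gamma:\beta\in A,\gamma\in B\}$, and for $Z\subseteq R_n$, $C_Z$ denotes the cyclic code of length $n$ over $\mathbb{F}_q$ with complete defining set $Z$, i.e. the ideal generated by $\prod_{\beta\in Z}(x-\beta)$ in $\mathbb{F}_q[x]/(x^n-1)$, identified with a subspace of $\mathbb{F}_q^n$; it has dimension $n-|Z|$. Locality: for a linear code $C\subseteq\mathbb{F}_q^n$ and integers $r\ge1$, $\delta\ge2$, the $i$-th coordinate has $(r,\delta)$-locality if there is $S_i\subseteq\{1,\dots,n\}$ with $i\in S_i$, $|S_i|\le r+\delta-1$ such that the punctured code $C|_{S_i}$ has minimum distance at least $\delta$; $C$ is an $(r,\delta)$-LRC if every coordinate has $(r,\delta)$-locality. An $[n,k,d]$ $(r,\delta)$-LRC is optimal if $d=n-k-(\lceil k/r\rceil-1)(\delta-1)+1$ (this quantity is always an upper bound on $d$). *)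

theory Defs
  imports "HOL-Computational_Algebra.Polynomial" "HOL-Library.Function_Algebras"
begin

text \<open>Vectors of length n over a field are modelled as functions nat => 'a;
  coordinate k (0 <= k < n) corresponds to coordinate k+1 of the paper.
  All codewords considered vanish outside {0..<n}.\<close>

definition primitive_root_of_unity :: "nat \<Rightarrow> 'a::field \<Rightarrow> bool" where
  "primitive_root_of_unity n a \<longleftrightarrow> 0 < n \<and> a ^ n = 1 \<and> (\<forall>k. 0 < k \<and> k < n \<longrightarrow> a ^ k \<noteq> 1)"

definition roots_of_unity :: "nat \<Rightarrow> 'a::field set" where
  "roots_of_unity n = {x. x ^ n = 1}"

definition set_prod :: "'a::times set \<Rightarrow> 'a set \<Rightarrow> 'a set" where
  "set_prod A B = {x * y | x y. x \<in> A \<and> y \<in> B}"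

text \<open>Cyclic code with complete defining set Z: the ideal generated by
  prod_{beta in Z} (x - beta) in F[x]/(x^n - 1), a polynomial of degree < n
  being identified with its coefficient vector.\<close>
definition cyclic_code :: "nat \<Rightarrow> 'a::field set \<Rightarrow> (nat \<Rightarrow> 'a) set" where
  "cyclic_code n Z =
     {(\<lambda>k. coeff ((f * (\<Prod>\<beta>\<in>Z. [:- \<beta>, 1:])) mod (monom 1 n - 1)) k) | f. True}"

definition vscale :: "'a::field \<Rightarrow> (nat \<Rightarrow> 'a) \<Rightarrow> (nat \<Rightarrow> 'a)" where
  "vscale c v = (\<lambda>k. c * v k)"

definition code_dim :: "(nat \<Rightarrow> 'a::field) set \<Rightarrow> nat" where
  "code_dim C = vector_space.dim vscale C"

definition hamming_dist :: "nat \<Rightarrow> (nat \<Rightarrow> 'a) \<Rightarrow> (nat \<Rightarrow> 'a) \<Rightarrow> nat" where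
  "hamming_dist n x y = card {k. k < n \<and> x k \<noteq> y k}"

definition min_dist :: "nat \<Rightarrow> (nat \<Rightarrow> 'a) set \<Rightarrow> nat" where
  "min_dist n C = Min {hamming_dist n x y | x y. x \<in> C \<and> y \<in> C \<and> x \<noteq> y}"

definition puncture :: "nat set \<Rightarrow> (nat \<Rightarrow> 'a::zero) set \<Rightarrow> (nat \<Rightarrow> 'a) set" where
  "puncture S C = {(\<lambda>k. if k \<in> S then c k else 0) | c. c \<in> C}"

definition min_dist_ge :: "nat \<Rightarrow> (nat \<Rightarrow> 'a) set \<Rightarrow> nat \<Rightarrow> bool" where
  "min_dist_ge n C \<delta> \<longleftrightarrow> (\<forall>x\<in>C. \<forall>y\<in>C. x \<noteq> y \<longrightarrow> \<delta> \<le> hamming_dist n x y)"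

definition has_locality :: "nat \<Rightarrow> (nat \<Rightarrow> 'a::zero) set \<Rightarrow> nat \<Rightarrow> nat \<Rightarrow> nat \<Rightarrow> bool" where
  "has_locality n C r \<delta> k \<longleftrightarrow>
     (\<exists>S. S \<subseteq> {0..<n} \<and> k \<in> S \<and> card S \<le> r + \<delta> - 1 \<and> min_dist_ge n (puncture S C) \<delta>)"

definition is_LRC :: "nat \<Rightarrow> (nat \<Rightarrow> 'a::zero) set \<Rightarrow> nat \<Rightarrow> nat \<Rightarrow> bool" where
  "is_LRC n C r \<delta> \<longleftrightarrow> (\<forall>k<n. has_locality n C r \<delta> k)"

definition optimal_LRC :: "nat \<Rightarrow> (nat \<Rightarrow> 'a::field) set \<Rightarrow> nat \<Rightarrow> nat \<Rightarrow> bool" where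
  "optimal_LRC n C r \<delta> \<longleftrightarrow> is_LRC n C r \<delta> \<and>
     int (min_dist n C) = int n - int (code_dim C)
        - (\<lceil>real (code_dim C) / real r\<rceil> - 1) * (int \<delta> - 1) + 1"

end

theory Submission
  imports Defs "HOL-Library.FuncSet" "HOL-Number_Theory.Cong"
begin

text \<open>
  Write \<open>\<beta> M = \<alpha>\<^bsup>t + M b\<^esup>\<close>, \<open>R = r + \<delta> - 1\<close> and \<open>D = l R + i + \<delta> - 1\<close>. The defining set is
  \<open>\<beta>\<close> applied to the \<open>D\<close> consecutive exponents \<open>0, \<dots>, D - 1\<close> and to the blocks of \<open>\<delta> - 1\<close>
  consecutive exponents starting at \<open>e R + j\<close>, \<open>l < e < \<nu>\<close>. Since \<open>k \<mapsto> \<alpha>\<^bsup>k b\<^esup>\<close> is injective,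
  a codeword vanishing at \<open>D\<close> consecutive \<open>\<beta> M\<close> has weight above \<open>D\<close> (a Vandermonde argument:
  the BCH bound). Grouping coordinates by residue mod \<open>\<nu>\<close> turns evaluation at
  \<open>\<beta> (e R + M)\<close> into \<open>\<Sum>\<^sub>s \<omega>\<^bsup>e s\<^esup> c\<^sub>s(\<beta> M)\<close> with \<open>\<omega> = \<alpha>\<^bsup>R b\<^esup>\<close> of order \<open>\<nu>\<close>; the block starting
  at \<open>e R + j\<close> is present for every \<open>e < \<nu>\<close> (for \<open>e \<le> l\<close> inside \<open>0, \<dots>, D - 1\<close>, using \<open>j \<le> i\<close>),
  so every class sum \<open>c\<^sub>s\<close> vanishes at \<open>\<delta> - 1\<close> consecutive points and each residue class, of
  size \<open>R\<close>, is a local code of distance \<open>\<delta>\<close>. A codeword of weight exactly \<open>D + 1\<close> exists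
  because a vector supported on \<open>D + 1\<close> suitable positions only has to satisfy \<open>D\<close> linear
  conditions. The dimension is \<open>n\<close> minus the size of the defining set, and the three
  parameters meet the Singleton-like bound.
\<close>

section \<open>Cyclic codes as vanishing codes\<close>

definition eval_vec :: "nat \<Rightarrow> (nat \<Rightarrow> 'a::field) \<Rightarrow> 'a \<Rightarrow> 'a" where
  "eval_vec n v z = (\<Sum>k<n. v k * z ^ k)"

definition vanishing_code :: "nat \<Rightarrow> 'a::field set \<Rightarrow> (nat \<Rightarrow> 'a) set" where
  "vanishing_code n Z = {v. (\<forall>k\<ge>n. v k = 0) \<and> (\<forall>z\<in>Z. eval_vec n v z = 0)}"

lemma poly_eq_sum_lessThan:
  fixes p :: "'a::field poly"
  assumes "degree p < n"
  shows "poly p z = (\<Sum>k<n. coeff p k * z ^ k)"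
proof -
  have "poly p z = (\<Sum>k\<le>degree p. coeff p k * z ^ k)" by (rule poly_altdef)
  also have "\<dots> = (\<Sum>k<n. coeff p k * z ^ k)"
    by (rule sum.mono_neutral_left) (use assms coeff_eq_0 in \<open>auto intro: le_degree\<close>)
  finally show ?thesis .
qed

lemma eval_vec_coeff:
  "degree p < n \<Longrightarrow> eval_vec n (coeff p) z = poly p z"
  by (simp add: eval_vec_def poly_eq_sum_lessThan)

lemma coeff_sum_monom:
  assumes "\<forall>k\<ge>n. v k = 0"
  shows "coeff (\<Sum>k<n. monom (v k) k) = v"
proof
  fix i show "coeff (\<Sum>k<n. monom (v k) k) i = v i"
    using assms by (cases "i < n") (auto simp: coeff_sum)
qed

lemma degree_sum_monom_less: "0 < n \<Longrightarrow> degree (\<Sum>k<n. monom (c k) k) < n"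
proof -
  assume "0 < n"
  moreover have "degree (\<Sum>k<n. monom (c k) k) \<le> n - 1"
    by (rule degree_sum_le) (auto intro: order.trans[OF degree_monom_le])
  ultimately show ?thesis by linarith
qed

lemma prod_linear_factors_dvd:
  fixes p :: "'a::field poly"
  assumes "finite Z" "\<forall>z\<in>Z. poly p z = 0"
  shows "(\<Prod>z\<in>Z. [:-z, 1:]) dvd p"
  using assms
proof (induction Z arbitrary: p rule: finite_induct)
  case empty
  then show ?case by simp
next
  case (insert z Z)
  then obtain h where h: "p = (\<Prod>z\<in>Z. [:-z, 1:]) * h" by (meson dvdE insert_iff)
  have "poly (\<Prod>z\<in>Z. [:-z, 1:]) z \<noteq> 0"
    using insert(1,2) by (auto simp: poly_prod)
  with insert.prems h have "[:-z, 1:] dvd h" by (simp add: poly_eq_0_iff_dvd)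
  with h insert(1,2) show ?case by (metis dvd_refl mult.commute mult_dvd_mono prod.insert)
qed

lemma degree_monom_minus_one: "0 < n \<Longrightarrow> degree (monom (1::'a::field) n - 1) = n"
  by (rule antisym, rule degree_diff_le) (auto simp: degree_monom_le intro: le_degree)

lemma vanishing_code_multiple:
  fixes Z :: "'a::field set"
  assumes "0 < n" and "finite Z" and "v \<in> vanishing_code n Z"
  obtains g where "v = coeff (g * (\<Prod>z\<in>Z. [:-z, 1:]))" and "degree (g * (\<Prod>z\<in>Z. [:-z, 1:])) < n"
proof -
  have v0: "\<forall>k\<ge>n. v k = 0" and vz: "\<forall>z\<in>Z. eval_vec n v z = 0"
    using assms(3) unfolding vanishing_code_def by auto
  define p where "p = (\<Sum>k<n. monom (v k) k)"
  have cp: "coeff p = v" using coeff_sum_monom[OF v0] p_def by simp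
  have dp: "degree p < n" unfolding p_def using assms(1) by (rule degree_sum_monom_less)
  have "\<forall>z\<in>Z. poly p z = 0" using vz eval_vec_coeff[OF dp] cp by auto
  then obtain g where "p = g * (\<Prod>z\<in>Z. [:-z, 1:])"
    using prod_linear_factors_dvd assms(2) by (metis dvd_def mult.commute)
  with cp dp show ?thesis using that by blast
qed

lemma cyclic_code_eq_vanishing_code:
  fixes Z :: "'a::field set"
  assumes n: "0 < n" and fin: "finite Z" and roots: "\<forall>z\<in>Z. z ^ n = 1"
  shows "cyclic_code n Z = vanishing_code n Z"
proof
  let ?G = "\<Prod>z\<in>Z. [:-z, 1:]" and ?X = "monom (1::'a) n - 1"
  have dX: "degree ?X = n" using degree_monom_minus_one[OF n] .
  show "cyclic_code n Z \<subseteq> vanishing_code n Z"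
  proof
    fix v assume "v \<in> cyclic_code n Z"
    then obtain f where v: "v = coeff ((f * ?G) mod ?X)" unfolding cyclic_code_def by auto
    define p where "p = (f * ?G) mod ?X"
    have dp: "degree p < n"
      using degree_mod_less[of ?X "f * ?G"] dX n unfolding p_def by fastforce
    have "poly p z = 0" if z: "z \<in> Z" for z
    proof -
      have "poly (f * ?G) z = poly ((f * ?G) div ?X) z * poly ?X z + poly p z"
        unfolding p_def by (metis div_mult_mod_eq poly_add poly_mult)
      moreover have "poly ?X z = 0" using roots z by (simp add: poly_monom)
      moreover have "poly ?G z = 0" using z fin by (auto simp: poly_prod)
      ultimately show ?thesis by simp
    qed
    with dp show "v \<in> vanishing_code n Z"
      unfolding vanishing_code_def v p_def[symmetric] by (auto simp: eval_vec_coeff coeff_eq_0)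
  qed
  show "vanishing_code n Z \<subseteq> cyclic_code n Z"
  proof
    fix v assume "v \<in> vanishing_code n Z"
    then obtain f where f: "v = coeff (f * ?G)" "degree (f * ?G) < n"
      using vanishing_code_multiple n fin by blast
    then have "(f * ?G) mod ?X = f * ?G" by (intro mod_poly_less) (simp only: dX)
    then have "v = coeff ((f * ?G) mod ?X)" using f by simp
    then show "v \<in> cyclic_code n Z" unfolding cyclic_code_def by auto
  qed
qed

lemma eval_vec_diff: "eval_vec n (f - g) z = eval_vec n f z - eval_vec n g z"
  unfolding eval_vec_def by (simp add: sum_subtractf left_diff_distrib)

lemma vanishing_code_diff:
  "x \<in> vanishing_code n Z \<Longrightarrow> y \<in> vanishing_code n Z \<Longrightarrow> x - y \<in> vanishing_code n Z"
  unfolding vanishing_code_def by (simp add: eval_vec_diff)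

lemma zero_in_vanishing_code: "0 \<in> vanishing_code n Z"
  unfolding vanishing_code_def eval_vec_def by simp

lemma hamming_dist_eq_card_support: "hamming_dist n x y = card {k. k < n \<and> (x - y) k \<noteq> (0::'a::ab_group_add)}"
  unfolding hamming_dist_def by simp

lemma hamming_dist_le: "hamming_dist n x y \<le> n"
proof -
  have "card {k. k < n \<and> x k \<noteq> y k} \<le> card {..<n}" by (rule card_mono) auto
  then show ?thesis unfolding hamming_dist_def by simp
qed

section \<open>Dimension\<close>

interpretation vec: vector_space "vscale :: 'a::field \<Rightarrow> (nat \<Rightarrow> 'a) \<Rightarrow> nat \<Rightarrow> 'a"
  by unfold_locales (auto simp: vscale_def fun_eq_iff algebra_simps)

definition shifted_generator :: "'a::field set \<Rightarrow> nat \<Rightarrow> nat \<Rightarrow> 'a" where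
  "shifted_generator Z s = coeff (monom 1 s * (\<Prod>z\<in>Z. [:-z, 1:]))"

lemma sum_vscale_shifted_generator:
  "(\<Sum>s<N. vscale (w s) (shifted_generator Z s)) = coeff ((\<Sum>s<N. monom (w s) s) * (\<Prod>z\<in>Z. [:-z, 1:]))"
proof
  fix k
  have "\<And>s. smult (w s) (monom 1 s * (\<Prod>z\<in>Z. [:-z, 1:])) = monom (w s) s * (\<Prod>z\<in>Z. [:-z, 1:])"
    by (simp add: mult_smult_left[symmetric] smult_monom)
  moreover have "(\<Sum>s<N. vscale (w s) (shifted_generator Z s)) k
      = coeff (\<Sum>s<N. smult (w s) (monom 1 s * (\<Prod>z\<in>Z. [:-z, 1:]))) k"
    by (induction N) (simp_all add: vscale_def shifted_generator_def)
  ultimately show "(\<Sum>s<N. vscale (w s) (shifted_generator Z s)) k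
      = coeff ((\<Sum>s<N. monom (w s) s) * (\<Prod>z\<in>Z. [:-z, 1:])) k"
    by (simp add: sum_distrib_right)
qed

context
  fixes n :: nat and Z :: "'a::field set"
  assumes n: "0 < n" and fin: "finite Z" and roots: "\<forall>z\<in>Z. z ^ n = 1" and card: "card Z \<le> n"
begin

private abbreviation "G \<equiv> \<Prod>z\<in>Z. [:-z, 1:]"

private lemma degree_G: "degree G = card Z" and G_nonzero: "G \<noteq> 0"
  using fin by (auto simp: degree_prod_eq_sum_degree)

lemma inj_on_shifted_generator: "inj_on (shifted_generator Z) {..<n - card Z}"
proof
  fix s s' assume "shifted_generator Z s = shifted_generator Z s'"
  then have "monom 1 s * G = monom 1 s' * G" unfolding shifted_generator_def by (simp add: poly_eq_iff)
  then have "monom (1::'a) s = monom 1 s'" using G_nonzero by simp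
  then show "s = s'" by (metis coeff_monom one_neq_zero)
qed

lemma shifted_generator_in_vanishing_code:
  assumes "s < n - card Z"
  shows "shifted_generator Z s \<in> vanishing_code n Z"
proof -
  have "degree (monom (1::'a) s * G) = s + card Z"
    using G_nonzero degree_G by (simp add: degree_mult_eq degree_monom_eq)
  moreover have "s + card Z < n" using assms by linarith
  ultimately have "(monom 1 s * G) mod (monom 1 n - 1) = monom 1 s * G"
    by (intro mod_poly_less) (simp add: degree_monom_minus_one[OF n])
  then have "shifted_generator Z s \<in> cyclic_code n Z"
    unfolding cyclic_code_def shifted_generator_def by (metis (mono_tags, lifting) mem_Collect_eq)
  then show ?thesis using cyclic_code_eq_vanishing_code[OF n fin roots] by simp
qed

lemma vanishing_code_subset_span:
  "vanishing_code n Z \<subseteq> vec.span (shifted_generator Z ` {..<n - card Z})"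
proof
  fix v assume "v \<in> vanishing_code n Z"
  then obtain g where g: "v = coeff (g * G)" "degree (g * G) < n"
    using vanishing_code_multiple n fin by blast
  have "\<forall>s\<ge>n - card Z. coeff g s = 0"
  proof (cases "g = 0")
    case False
    then have "degree (g * G) = degree g + card Z" using G_nonzero degree_G by (simp add: degree_mult_eq)
    with g(2) show ?thesis by (auto intro: coeff_eq_0)
  qed simp
  then have "g = (\<Sum>s<n - card Z. monom (coeff g s) s)"
    using coeff_sum_monom[of "n - card Z" "coeff g"] by (simp add: poly_eq_iff)
  then have "v = (\<Sum>s<n - card Z. vscale (coeff g s) (shifted_generator Z s))"
    using sum_vscale_shifted_generator[where w="coeff g" and N="n - card Z"] g(1) by simp
  also have "\<dots> \<in> vec.span (shifted_generator Z ` {..<n - card Z})"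
    by (intro vec.span_sum vec.span_scale vec.span_base) auto
  finally show "v \<in> vec.span (shifted_generator Z ` {..<n - card Z})" .
qed

lemma independent_shifted_generators:
  "vec.independent (shifted_generator Z ` {..<n - card Z})"
proof
  let ?B = "shifted_generator Z ` {..<n - card Z}"
  assume "vec.dependent ?B"
  then have "\<exists>u. (\<exists>v\<in>?B. u v \<noteq> 0) \<and> (\<Sum>v\<in>?B. vscale (u v) v) = 0"
    using vec.dependent_finite[of ?B] by (simp only: finite_imageI finite_lessThan)
  then obtain u where u: "\<exists>v\<in>?B. u v \<noteq> 0" and "(\<Sum>v\<in>?B. vscale (u v) v) = 0"
    by blast
  then have "(\<Sum>s<n - card Z. vscale (u (shifted_generator Z s)) (shifted_generator Z s)) = 0"
    by (simp add: sum.reindex[OF inj_on_shifted_generator])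
  then have "coeff ((\<Sum>s<n - card Z. monom (u (shifted_generator Z s)) s) * G) = 0"
    by (simp only: sum_vscale_shifted_generator)
  then have "(\<Sum>s<n - card Z. monom (u (shifted_generator Z s)) s) * G = 0"
    by (simp add: poly_eq_iff)
  then have "(\<Sum>s<n - card Z. monom (u (shifted_generator Z s)) s) = 0"
    using G_nonzero by simp
  moreover have "coeff (\<Sum>s<n - card Z. monom (u (shifted_generator Z s)) s) s
      = u (shifted_generator Z s)" if "s < n - card Z" for s
    using that by (simp add: coeff_sum)
  ultimately have "u (shifted_generator Z s) = 0" if "s < n - card Z" for s
    using that by simp
  then show False using u by auto
qed

lemma code_dim_vanishing_code: "code_dim (vanishing_code n Z) = n - card Z"
proof -
  have "vec.dim (vanishing_code n Z) = card (shifted_generator Z ` {..<n - card Z})"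
    using shifted_generator_in_vanishing_code vanishing_code_subset_span independent_shifted_generators
    by (intro vec.dim_unique) auto
  then show ?thesis by (simp add: code_dim_def card_image[OF inj_on_shifted_generator])
qed

end

section \<open>Power sums, counting and residue classes\<close>

lemma power_sums_zero_imp_zero:
  fixes x y :: "'b \<Rightarrow> 'a::field"
  assumes fin: "finite K" and inj: "inj_on x K"
    and sums: "\<forall>m<card K. (\<Sum>k\<in>K. y k * x k ^ m) = 0" and k0: "k0 \<in> K"
  shows "y k0 = 0"
proof -
  text \<open>Pair the power sums with the coefficients of the Lagrange polynomial vanishing on
    \<open>x ` (K - {k0})\<close>.\<close>
  define L where "L = (\<Prod>k\<in>K-{k0}. [:-x k, 1:])"
  have "degree L = card (K - {k0})" unfolding L_def using fin
    by (subst degree_prod_eq_sum_degree) auto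
  moreover have "card (K - {k0}) < card K" using fin k0 by (meson card_Diff1_less)
  ultimately have "(\<Sum>m\<le>degree L. coeff L m * (\<Sum>k\<in>K. y k * x k ^ m)) = 0"
    using sums by (intro sum.neutral) auto
  moreover have "(\<Sum>k\<in>K. y k * poly L (x k)) = (\<Sum>m\<le>degree L. coeff L m * (\<Sum>k\<in>K. y k * x k ^ m))"
    by (simp add: poly_altdef sum_distrib_left sum.swap[of _ K] mult_ac)
  moreover have "poly L (x k) = 0" if "k \<in> K - {k0}" for k
    unfolding L_def poly_prod using fin that by (auto intro: prod_zero)
  then have "(\<Sum>k\<in>K. y k * poly L (x k)) = y k0 * poly L (x k0)"
    using fin k0 by (simp add: sum.remove)
  moreover have "poly L (x k0) \<noteq> 0"
    unfolding L_def poly_prod using fin inj k0 by (auto simp: inj_on_def)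
  ultimately show ?thesis by simp
qed

lemma card_support_gt_of_power_sums_zero:
  fixes x y :: "'b \<Rightarrow> 'a::field"
  assumes fin: "finite K" and inj: "inj_on x K"
    and sums: "\<forall>m<d. (\<Sum>k\<in>K. y k * x k ^ m) = 0" and nonzero: "\<exists>k\<in>K. y k \<noteq> 0"
  shows "d < card {k\<in>K. y k \<noteq> 0}"
proof (rule ccontr)
  let ?K = "{k\<in>K. y k \<noteq> 0}"
  assume "\<not> d < card ?K"
  moreover have "(\<Sum>k\<in>?K. y k * x k ^ m) = (\<Sum>k\<in>K. y k * x k ^ m)" for m
    using fin by (intro sum.mono_neutral_left) auto
  ultimately have "\<forall>m<card ?K. (\<Sum>k\<in>?K. y k * x k ^ m) = 0" using sums by simp
  moreover have "finite ?K" "inj_on x ?K" using fin inj by (auto intro: inj_on_subset)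
  moreover obtain k where "k \<in> ?K" using nonzero by blast
  ultimately have "y k = 0" using power_sums_zero_imp_zero[of ?K x y k] by simp
  with \<open>k \<in> ?K\<close> show False by simp
qed

lemma two_le_card_UNIV: "2 \<le> card (UNIV :: 'a::{finite, zero_neq_one} set)"
proof -
  have "card {0 :: 'a, 1} = 2" by simp
  then show ?thesis by (metis card_mono finite subset_UNIV)
qed

text \<open>Pigeonhole: two of the vectors supported in \<open>T\<close> take the same values under all the
  constraints, and their difference is a nonzero common zero.\<close>
lemma exists_nonzero_common_zero:
  fixes \<Phi> :: "'i \<Rightarrow> ('b \<Rightarrow> 'a::{finite, ab_group_add, zero_neq_one}) \<Rightarrow> 'a"
  assumes finT: "finite T" and finI: "finite I" and card: "card I < card T"
    and additive: "\<forall>x\<in>I. \<forall>f g. \<Phi> x (f - g) = \<Phi> x f - \<Phi> x g"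
  shows "\<exists>c. c \<noteq> 0 \<and> (\<forall>k. c k \<noteq> 0 \<longrightarrow> k \<in> T) \<and> (\<forall>x\<in>I. \<Phi> x c = 0)"
proof -
  define ext where "ext g = (\<lambda>k. if k \<in> T then g k else 0)" for g :: "'b \<Rightarrow> 'a"
  define F where "F g = restrict (\<lambda>x. \<Phi> x (ext g)) I" for g
  define X where "X = PiE T (\<lambda>_. UNIV :: 'a set)"
  have "card (F ` X) \<le> card (PiE I (\<lambda>_. UNIV :: 'a set))"
    by (rule card_mono) (auto simp: F_def finite_PiE finI)
  also have "\<dots> = card (UNIV :: 'a set) ^ card I" using finI by (simp add: card_PiE)
  also have "\<dots> < card (UNIV :: 'a set) ^ card T"
    using card two_le_card_UNIV[where 'a='a] by (intro power_strict_increasing) auto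
  also have "\<dots> = card X" unfolding X_def using finT by (simp add: card_PiE)
  finally have "\<not> inj_on F X" using card_image by fastforce
  then obtain g1 g2 where g: "g1 \<in> X" "g2 \<in> X" "g1 \<noteq> g2" "F g1 = F g2"
    unfolding inj_on_def by blast
  then obtain k where k: "k \<in> T" "g1 k \<noteq> g2 k"
    unfolding X_def using PiE_ext by blast
  define c where "c = ext g1 - ext g2"
  have "c k \<noteq> 0" using k by (simp add: c_def ext_def)
  moreover have "\<forall>k. c k \<noteq> 0 \<longrightarrow> k \<in> T" by (simp add: c_def ext_def)
  moreover have "\<Phi> x c = 0" if "x \<in> I" for x
    using fun_cong[OF g(4), of x] that additive by (simp add: F_def c_def)
  ultimately show ?thesis by (intro exI[of _ c]) (auto simp: fun_eq_iff)
qed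

definition residue_class_sum :: "nat \<Rightarrow> nat \<Rightarrow> (nat \<Rightarrow> 'a::field) \<Rightarrow> nat \<Rightarrow> 'a \<Rightarrow> 'a" where
  "residue_class_sum n \<nu> v s z = (\<Sum>k\<in>{k\<in>{..<n}. k mod \<nu> = s}. v k * z ^ k)"

lemma residue_class_sum_diff:
  "residue_class_sum n \<nu> (f - g) s z = residue_class_sum n \<nu> f s z - residue_class_sum n \<nu> g s z"
  unfolding residue_class_sum_def by (simp add: sum_subtractf left_diff_distrib)

lemma power_mod_root_of_unity:
  assumes "\<omega> ^ \<nu> = (1::'a::monoid_mult)"
  shows "\<omega> ^ k = \<omega> ^ (k mod \<nu>)"
proof -
  have "\<omega> ^ k = (\<omega> ^ \<nu>) ^ (k div \<nu>) * \<omega> ^ (k mod \<nu>)"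
    by (simp only: power_mult[symmetric] power_add[symmetric] mult_div_mod_eq)
  with assms show ?thesis by simp
qed

lemma eval_vec_mult_root_of_unity:
  fixes \<omega> :: "'a::field"
  assumes "0 < \<nu>" and "\<omega> ^ \<nu> = 1"
  shows "eval_vec n v (z * \<omega>) = (\<Sum>s<\<nu>. \<omega> ^ s * residue_class_sum n \<nu> v s z)"
proof -
  have "eval_vec n v (z * \<omega>) = (\<Sum>k<n. v k * z ^ k * \<omega> ^ (k mod \<nu>))"
    unfolding eval_vec_def power_mult_distrib mult.assoc
    by (intro sum.cong refl) (subst power_mod_root_of_unity[OF assms(2)], rule refl)
  also have "\<dots> = (\<Sum>s<\<nu>. \<Sum>k\<in>{k\<in>{..<n}. k mod \<nu> = s}. v k * z ^ k * \<omega> ^ (k mod \<nu>))"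
    by (rule sum.group[symmetric]) (use assms(1) in auto)
  also have "\<dots> = (\<Sum>s<\<nu>. \<omega> ^ s * residue_class_sum n \<nu> v s z)"
    unfolding residue_class_sum_def by (intro sum.cong refl) (auto simp: sum_distrib_left mult_ac)
  finally show ?thesis .
qed

lemma primitive_root_power_eq_iff:
  assumes a: "primitive_root_of_unity n a"
  shows "a ^ x = a ^ y \<longleftrightarrow> x mod n = y mod n"
proof -
  have n: "0 < n" and an: "a ^ n = 1" and prim: "\<And>k. 0 < k \<Longrightarrow> k < n \<Longrightarrow> a ^ k \<noteq> 1"
    using a unfolding primitive_root_of_unity_def by auto
  have a0: "a \<noteq> 0" using an n by (metis power_0_left less_not_refl2 zero_neq_one)
  have distinct: "a ^ p \<noteq> a ^ q" if "p < q" "q < n" for p q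
  proof
    assume "a ^ p = a ^ q"
    moreover have "a ^ q = a ^ p * a ^ (q - p)" using that by (simp flip: power_add)
    ultimately have "a ^ (q - p) = 1" using a0 by simp
    with prim that show False by simp
  qed
  have x: "a ^ x = a ^ (x mod n)" and y: "a ^ y = a ^ (y mod n)"
    by (fact power_mod_root_of_unity[OF an])+
  show ?thesis
  proof
    assume "a ^ x = a ^ y"
    then have "a ^ (x mod n) = a ^ (y mod n)" using x y by simp
    moreover have "x mod n < n" "y mod n < n" using n by auto
    ultimately show "x mod n = y mod n" using distinct by (metis linorder_neqE_nat)
  qed (use x y in simp)
qed

lemma inj_on_primitive_root_power_mult:
  assumes "primitive_root_of_unity n a" and "coprime b n"
  shows "inj_on (\<lambda>k. a ^ (k * b)) {..<n}"
proof
  fix x y assume "x \<in> {..<n}" "y \<in> {..<n}" "a ^ (x * b) = a ^ (y * b)"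
  moreover from this have "[x * b = y * b] (mod n)"
    using assms(1) by (simp add: primitive_root_power_eq_iff cong_def)
  then have "[x = y] (mod n)" using cong_mult_rcancel_nat[OF assms(2)] by blast
  ultimately show "x = y" by (simp add: cong_def)
qed

lemma inj_on_add_mult: "inj_on (\<lambda>(s, m). s + q * m) ({..<q} \<times> UNIV)" for q :: nat
proof (rule inj_onI, clarify)
  fix s m s' m' assume "s < q" "s' < q" and eq: "s + q * m = s' + q * m'"
  have "(s + q * m) mod q = (s' + q * m') mod q" "(s + q * m) div q = (s' + q * m') div q"
    using eq by (rule arg_cong)+
  with \<open>s < q\<close> \<open>s' < q\<close> show "s = s' \<and> m = m'" by simp
qed

lemma nat_dim_identity:
  fixes \<nu> R r d l i :: nat
  assumes "R = r + d" "l < \<nu>" "i < r"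
  shows "\<nu> * R - (l * R + i + d + (\<nu> - l - 1) * d) = (\<nu> - l) * r - i"
proof -
  define w where "w = \<nu> - l - 1"
  have \<nu>: "\<nu> = l + 1 + w" using \<open>l < \<nu>\<close> unfolding w_def by simp
  have "\<nu> * R = (l * R + i + d + (\<nu> - l - 1) * d) + (r + w * r - i)"
    using assms unfolding \<nu> by (simp add: algebra_simps)
  moreover have "(\<nu> - l) * r - i = r + w * r - i" unfolding \<nu> by (simp add: algebra_simps)
  ultimately show ?thesis by simp
qed

lemma ceiling_diff_div:
  assumes "i < r" and "1 \<le> m"
  shows "\<lceil>real (m * r - i) / real r\<rceil> = int m"
proof (rule ceiling_unique)
  have "i \<le> m * r" using assms by (metis le_trans less_imp_le_nat mult_1 mult_le_mono1)
  then have "real (m * r - i) / real r = real m - real i / real r"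
    using assms by (simp add: of_nat_diff field_simps)
  moreover have "0 \<le> real i / real r" "real i / real r < 1" using assms by auto
  ultimately show "real_of_int (int m) - 1 < real (m * r - i) / real r"
    and "real (m * r - i) / real r \<le> real_of_int (int m)" by simp_all
qed

section \<open>The construction\<close>

text \<open>Of the paper's two admissible cases for \<open>(l, j)\<close> only their common consequences
  \<open>l + 2 \<le> \<nu>\<close> and \<open>j \<le> i\<close> are needed.\<close>
locale lrc_construction =
  fixes \<alpha> :: "'a::{finite, field}" and n r \<delta> b t i l j :: nat
  assumes primitive: "primitive_root_of_unity n \<alpha>"
    and r_pos: "1 \<le> r" and \<delta>_ge_2: "2 \<le> \<delta>"
    and R_dvd_n: "(r + \<delta> - 1) dvd n"
    and coprime_b_n: "coprime b n"
    and i_less_r: "i < r"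
    and l_bound: "l + 2 \<le> n div (r + \<delta> - 1)"
    and j_le_i: "j \<le> i"
begin

definition "R = r + \<delta> - 1"
definition "\<nu> = n div R"
definition "D = l * R + i + \<delta> - 1"
definition "\<beta> M = \<alpha> ^ (t + M * b)"
definition "\<omega> = \<alpha> ^ (R * b)"

definition "block_points E = (\<lambda>(e, u). e * R + j + u) ` (E \<times> {..\<delta> - 2})"
definition "exponents = {..<D} \<union> block_points {l<..<\<nu>}"

abbreviation "code \<equiv> vanishing_code n (\<beta> ` exponents)"

lemma n_pos: "0 < n" and alpha_pow_n: "\<alpha> ^ n = 1" and alpha_nonzero: "\<alpha> \<noteq> 0"
  using primitive unfolding primitive_root_of_unity_def by (auto simp: power_0_left)

lemma nu_times_R: "\<nu> * R = n"
  using R_dvd_n unfolding R_def \<nu>_def by simp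

lemma l_plus_2_le_nu: "l + 2 \<le> \<nu>"
  using l_bound unfolding \<nu>_def R_def .

lemma j_plus_\<delta>_le_R: "j + \<delta> - 1 \<le> R" and i_plus_\<delta>_le_R: "i + \<delta> \<le> R"
  using i_less_r j_le_i \<delta>_ge_2 unfolding R_def by auto

lemma R_pos: "0 < R"
  using r_pos \<delta>_ge_2 unfolding R_def by simp

lemma D_plus_1: "D + 1 = l * R + (i + \<delta>)"
  using \<delta>_ge_2 unfolding D_def by simp

lemma beta_nonzero: "\<beta> M \<noteq> 0"
  using alpha_nonzero by (simp add: \<beta>_def)

lemma beta_root: "\<beta> M ^ n = 1"
proof -
  have "\<beta> M ^ n = (\<alpha> ^ n) ^ (t + M * b)"
    by (simp only: \<beta>_def power_mult[symmetric] mult.commute)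
  then show ?thesis by (simp add: alpha_pow_n)
qed

lemma beta_add_power: "\<beta> (M + u) ^ k = \<beta> M ^ k * (\<alpha> ^ (k * b)) ^ u"
proof -
  have "(t + (M + u) * b) * k = (t + M * b) * k + k * b * u" by (simp add: algebra_simps)
  then show ?thesis by (simp only: \<beta>_def power_mult[symmetric] power_add[symmetric])
qed

lemma beta_add_block: "\<beta> (e * R + M) = \<beta> M * \<omega> ^ e"
proof -
  have "t + (e * R + M) * b = (t + M * b) + R * b * e" by (simp add: algebra_simps)
  then show ?thesis by (simp only: \<beta>_def \<omega>_def power_mult[symmetric] power_add[symmetric])
qed

lemma omega_pow_nu: "\<omega> ^ \<nu> = 1"
proof -
  have "R * b * \<nu> = n * b" using nu_times_R by (simp add: ac_simps)
  then have "\<omega> ^ \<nu> = (\<alpha> ^ n) ^ b" by (simp only: \<omega>_def flip: power_mult)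
  then show ?thesis by (simp add: alpha_pow_n)
qed

lemma inj_on_beta: "inj_on \<beta> {..<n}"
  using inj_on_primitive_root_power_mult[OF primitive coprime_b_n] alpha_nonzero
  by (auto simp: inj_on_def \<beta>_def power_add)

lemma inj_on_omega_power: "inj_on (\<lambda>s. \<omega> ^ s) {..<\<nu>}"
proof
  fix s s' assume "s \<in> {..<\<nu>}" "s' \<in> {..<\<nu>}" and eq: "\<omega> ^ s = \<omega> ^ s'"
  then have "R * s < R * \<nu>" "R * s' < R * \<nu>" using R_pos by auto
  moreover have "R * \<nu> = n" using nu_times_R by (simp only: mult.commute)
  ultimately have "R * s < n" "R * s' < n" by simp_all
  moreover have "\<omega> ^ x = \<alpha> ^ ((R * x) * b)" for x
  proof -
    have "R * b * x = R * x * b" by simp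
    then show ?thesis by (simp only: \<omega>_def power_mult[symmetric])
  qed
  ultimately have "R * s = R * s'"
    using eq by (intro inj_onD[OF inj_on_primitive_root_power_mult[OF primitive coprime_b_n]]) simp_all
  then show "s = s'" using R_pos by simp
qed

lemma block_point_div_mod:
  assumes "u \<le> \<delta> - 2"
  shows "(e * R + j + u) div R = e" "(e * R + j + u) mod R = j + u"
proof -
  have "j + u < R" using assms j_plus_\<delta>_le_R \<delta>_ge_2 by linarith
  moreover have "e * R + j + u = (j + u) + e * R" by simp
  ultimately show "(e * R + j + u) div R = e" "(e * R + j + u) mod R = j + u"
    by (simp_all only:) simp_all
qed

lemma inj_on_block_points: "inj_on (\<lambda>(e, u). e * R + j + u) (E \<times> {..\<delta> - 2})"
proof (rule inj_onI, clarify)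
  fix e u e' u' assume "u \<le> \<delta> - 2" "u' \<le> \<delta> - 2" and eq: "e * R + j + u = e' * R + j + u'"
  then have "e = e'" "j + u = j + u'"
    using block_point_div_mod[of u e] block_point_div_mod[of u' e'] by metis+
  then show "e = e' \<and> u = u'" by simp
qed

lemma card_block_points: "card (block_points E) = card E * (\<delta> - 1)"
proof -
  have "\<delta> - 1 = Suc (\<delta> - 2)" using \<delta>_ge_2 by simp
  then show ?thesis
    unfolding block_points_def card_image[OF inj_on_block_points] by (simp add: card_cartesian_product)
qed

lemma block_point_mem: "e \<in> E \<Longrightarrow> u \<le> \<delta> - 2 \<Longrightarrow> e * R + j + u \<in> block_points E"
  unfolding block_points_def by (intro rev_image_eqI[of "(e, u)"]) auto

lemma block_add_less_n: "e < \<nu> \<Longrightarrow> x < R \<Longrightarrow> e * R + x < n"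
proof -
  assume "e < \<nu>" "x < R"
  then have "e * R + x < (e + 1) * R" by simp
  also have "\<dots> \<le> \<nu> * R" using \<open>e < \<nu>\<close> by (intro mult_le_mono1) simp
  finally show ?thesis by (simp only: nu_times_R)
qed

lemma D_less_n: "D < n"
proof -
  have "D = l * R + (i + \<delta> - 1)" using \<delta>_ge_2 unfolding D_def by simp
  also have "\<dots> < n" using l_plus_2_le_nu i_plus_\<delta>_le_R \<delta>_ge_2 by (intro block_add_less_n) auto
  finally show ?thesis .
qed

lemma block_points_subset: "block_points {..<\<nu>} \<subseteq> {..<n}"
  unfolding block_points_def using j_plus_\<delta>_le_R \<delta>_ge_2
  by (auto simp: add.assoc intro!: block_add_less_n)

lemma exponents_subset: "exponents \<subseteq> {..<n}"
  using D_less_n block_points_subset unfolding exponents_def block_points_def by fastforce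

lemma block_points_initial_subset: "block_points {..l} \<subseteq> {..<D}"
proof
  fix x assume "x \<in> block_points {..l}"
  then obtain e u where eu: "e \<le> l" "u \<le> \<delta> - 2" "x = e * R + j + u"
    unfolding block_points_def by auto
  moreover have "e * R \<le> l * R" using eu by simp
  ultimately show "x \<in> {..<D}" unfolding D_def lessThan_iff using j_le_i \<delta>_ge_2 by linarith
qed

lemma block_points_split: "block_points {..<\<nu>} = block_points {..l} \<union> block_points {l<..<\<nu>}"
proof -
  have "{..<\<nu>} = {..l} \<union> {l<..<\<nu>}" using l_plus_2_le_nu by auto
  then show ?thesis unfolding block_points_def by (simp only: Sigma_Un_distrib1 image_Un)
qed

lemma block_points_subset_exponents: "block_points {..<\<nu>} \<subseteq> exponents"
  using block_points_initial_subset unfolding block_points_split exponents_def by blast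

lemma exponents_subset_Un: "exponents \<subseteq> ({..<D} - block_points {..l}) \<union> block_points {..<\<nu>}"
  unfolding block_points_split exponents_def by blast

lemma card_exponents: "card exponents = D + (\<nu> - l - 1) * (\<delta> - 1)"
proof -
  have "D \<le> x" if "x \<in> block_points {l<..<\<nu>}" for x
  proof -
    from that obtain e u where "l < e" "x = e * R + j + u" unfolding block_points_def by fastforce
    moreover have "(l + 1) * R \<le> e * R" using \<open>l < e\<close> by (intro mult_le_mono1) simp
    ultimately show ?thesis unfolding D_def using i_plus_\<delta>_le_R by simp
  qed
  then have "{..<D} \<inter> block_points {l<..<\<nu>} = {}" by fastforce
  then have "card exponents = D + card (block_points {l<..<\<nu>})"
    unfolding exponents_def by (subst card_Un_disjoint) (auto simp: block_points_def)
  then show ?thesis by (simp add: card_block_points)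
qed

lemma beta_mult: "\<beta> x * \<alpha> ^ (u * b) = \<beta> (x + u)"
  by (simp add: \<beta>_def add_mult_distrib add.assoc power_add)

lemma set_prod_beta:
  "set_prod (\<beta> ` X) ((\<lambda>u. \<alpha> ^ (u * b)) ` U) = \<beta> ` (\<lambda>(x, u). x + u) ` (X \<times> U)"
proof (intro equalityI subsetI)
  fix z assume "z \<in> set_prod (\<beta> ` X) ((\<lambda>u. \<alpha> ^ (u * b)) ` U)"
  then show "z \<in> \<beta> ` (\<lambda>(x, u). x + u) ` (X \<times> U)" unfolding set_prod_def by (auto simp: beta_mult)
next
  fix z assume "z \<in> \<beta> ` (\<lambda>(x, u). x + u) ` (X \<times> U)"
  then obtain x u where "x \<in> X" "u \<in> U" "z = \<beta> x * \<alpha> ^ (u * b)" by (auto simp: beta_mult)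
  then show "z \<in> set_prod (\<beta> ` X) ((\<lambda>u. \<alpha> ^ (u * b)) ` U)" unfolding set_prod_def by blast
qed

lemma sumset_initial_segment: "(\<lambda>(x, u). x + u) ` ({..l * R + i} \<times> {..\<delta> - 2}) = {..<D}"
proof (intro equalityI subsetI)
  fix y assume "y \<in> (\<lambda>(x, u). x + u) ` ({..l * R + i} \<times> {..\<delta> - 2})"
  then show "y \<in> {..<D}" unfolding D_def using \<delta>_ge_2 by auto
next
  fix y assume "y \<in> {..<D}"
  then have "(min y (l * R + i), y - min y (l * R + i)) \<in> {..l * R + i} \<times> {..\<delta> - 2}"
    unfolding D_def by auto
  then show "y \<in> (\<lambda>(x, u). x + u) ` ({..l * R + i} \<times> {..\<delta> - 2})"
    by (rule rev_image_eqI) simp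
qed

lemma sumset_blocks:
  "(\<lambda>(x, u). x + u) ` ({(l + e) * R + j | e. 1 \<le> e \<and> e \<le> \<nu> - l - 1} \<times> {..\<delta> - 2})
     = block_points {l<..<\<nu>}"
proof (intro equalityI subsetI)
  fix y assume "y \<in> (\<lambda>(x, u). x + u) ` ({(l + e) * R + j | e. 1 \<le> e \<and> e \<le> \<nu> - l - 1} \<times> {..\<delta> - 2})"
  then obtain e u where "1 \<le> e" "e \<le> \<nu> - l - 1" "u \<le> \<delta> - 2" "y = (l + e) * R + j + u" by auto
  moreover have "l + e \<in> {l<..<\<nu>}" using calculation l_plus_2_le_nu by auto
  ultimately show "y \<in> block_points {l<..<\<nu>}"
    unfolding block_points_def by (intro rev_image_eqI[of "(l + e, u)"]) auto
next
  fix y assume "y \<in> block_points {l<..<\<nu>}"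
  then obtain e u where eu: "l < e" "e < \<nu>" "u \<le> \<delta> - 2" "y = e * R + j + u"
    unfolding block_points_def by auto
  then have "1 \<le> e - l" "e - l \<le> \<nu> - l - 1" by auto
  then have "(l + (e - l)) * R + j \<in> {(l + e) * R + j | e. 1 \<le> e \<and> e \<le> \<nu> - l - 1}" by blast
  then have "((l + (e - l)) * R + j, u) \<in> {(l + e) * R + j | e. 1 \<le> e \<and> e \<le> \<nu> - l - 1} \<times> {..\<delta> - 2}"
    using eu by simp
  moreover have "y = (\<lambda>(x, u). x + u) ((l + (e - l)) * R + j, u)" using eu by simp
  ultimately show "y \<in> (\<lambda>(x, u). x + u) ` ({(l + e) * R + j | e. 1 \<le> e \<and> e \<le> \<nu> - l - 1} \<times> {..\<delta> - 2})"
    by (rule rev_image_eqI)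
qed

lemma defining_set_eq:
  "set_prod ({\<alpha> ^ (t + m * b) | m. m \<le> l * R + i}
             \<union> {\<alpha> ^ (t + ((l + e) * R + j) * b) | e. 1 \<le> e \<and> e \<le> \<nu> - l - 1})
            {\<alpha> ^ (m * b) | m. m \<le> \<delta> - 2}
   = \<beta> ` exponents"
proof -
  let ?Y = "{(l + e) * R + j | e. 1 \<le> e \<and> e \<le> \<nu> - l - 1}"
  have A: "{\<alpha> ^ (t + m * b) | m. m \<le> l * R + i} \<union> {\<alpha> ^ (t + ((l + e) * R + j) * b) | e. 1 \<le> e \<and> e \<le> \<nu> - l - 1}
      = \<beta> ` ({..l * R + i} \<union> ?Y)"
    by (auto simp: \<beta>_def)
  have B: "{\<alpha> ^ (m * b) | m. m \<le> \<delta> - 2} = (\<lambda>u. \<alpha> ^ (u * b)) ` {..\<delta> - 2}" by auto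
  have "(\<lambda>(x, u). x + u) ` (({..l * R + i} \<union> ?Y) \<times> {..\<delta> - 2}) = exponents"
    unfolding Sigma_Un_distrib1 image_Un sumset_initial_segment sumset_blocks exponents_def ..
  then show ?thesis unfolding A B set_prod_beta by simp
qed

lemma nu_pos: "0 < \<nu>"
  using l_plus_2_le_nu by simp

lemma eval_vec_beta: "eval_vec n v (\<beta> M) = (\<Sum>k<n. (v k * \<beta> 0 ^ k) * (\<alpha> ^ (k * b)) ^ M)"
  using beta_add_power[of 0 M] by (simp add: eval_vec_def mult.assoc)

lemma eval_vec_beta_block:
  "eval_vec n v (\<beta> (e * R + M)) = (\<Sum>s<\<nu>. residue_class_sum n \<nu> v s (\<beta> M) * (\<omega> ^ s) ^ e)"
proof -
  have "(\<omega> ^ e) ^ \<nu> = (\<omega> ^ \<nu>) ^ e" by (simp only: mult.commute flip: power_mult)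
  then have root: "(\<omega> ^ e) ^ \<nu> = 1" by (simp add: omega_pow_nu)
  show ?thesis
    unfolding beta_add_block eval_vec_mult_root_of_unity[OF nu_pos root]
    by (simp add: mult.commute flip: power_mult)
qed

lemma code_vanishes: "c \<in> code \<Longrightarrow> M \<in> exponents \<Longrightarrow> eval_vec n c (\<beta> M) = 0"
  and code_support: "c \<in> code \<Longrightarrow> c k \<noteq> 0 \<Longrightarrow> k < n"
  unfolding vanishing_code_def by (auto simp: not_le[symmetric])

lemma weight_gt_D:
  assumes c: "c \<in> code" and "c \<noteq> 0"
  shows "D < card {k. k < n \<and> c k \<noteq> 0}"
proof -
  obtain k0 where "c k0 \<noteq> 0" using \<open>c \<noteq> 0\<close> by (auto simp: fun_eq_iff)
  have "\<forall>M<D. (\<Sum>k\<in>{..<n}. (c k * \<beta> 0 ^ k) * (\<alpha> ^ (k * b)) ^ M) = 0"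
    using code_vanishes[OF c] by (auto simp: exponents_def eval_vec_beta[symmetric])
  then have "D < card {k\<in>{..<n}. c k * \<beta> 0 ^ k \<noteq> 0}"
    using code_support[OF c] \<open>c k0 \<noteq> 0\<close> beta_nonzero
    by (intro card_support_gt_of_power_sums_zero[OF _ inj_on_primitive_root_power_mult[OF primitive coprime_b_n]])
      auto
  moreover have "{k\<in>{..<n}. c k * \<beta> 0 ^ k \<noteq> 0} = {k. k < n \<and> c k \<noteq> 0}"
    using beta_nonzero by auto
  ultimately show ?thesis by simp
qed

text \<open>The points \<open>\<beta> (e * R + j + u)\<close>, \<open>e < \<nu>\<close>, differ by the \<open>\<nu>\<close>-th roots of unity \<open>\<omega>\<^sup>e\<close>, so
  vanishing there forces every residue class sum mod \<open>\<nu>\<close> to vanish at \<open>\<beta> (j + u)\<close>.\<close>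
lemma residue_class_sum_zero:
  assumes c: "c \<in> code" and u: "u \<le> \<delta> - 2" and s: "s < \<nu>"
  shows "residue_class_sum n \<nu> c s (\<beta> (j + u)) = 0"
proof -
  have sums: "(\<Sum>s\<in>{..<\<nu>}. residue_class_sum n \<nu> c s (\<beta> (j + u)) * (\<omega> ^ s) ^ e) = 0"
    if "e < \<nu>" for e
  proof -
    have "e * R + j + u \<in> exponents"
      using block_point_mem[of e "{..<\<nu>}" u] block_points_subset_exponents that u by auto
    then show ?thesis
      using code_vanishes[OF c] eval_vec_beta_block[of c e "j + u"] by (simp add: add.assoc)
  qed
  show ?thesis
    using power_sums_zero_imp_zero[OF _ inj_on_omega_power,
        where y="\<lambda>s. residue_class_sum n \<nu> c s (\<beta> (j + u))"] sums s by simp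
qed

lemma residue_class_weight_ge:
  assumes c: "c \<in> code" and k1: "c k1 \<noteq> 0"
  shows "\<delta> \<le> card {k. k < n \<and> k mod \<nu> = k1 mod \<nu> \<and> c k \<noteq> 0}"
proof -
  let ?K = "{k\<in>{..<n}. k mod \<nu> = k1 mod \<nu>}"
  have "\<forall>u<\<delta> - 1. (\<Sum>k\<in>?K. (c k * \<beta> j ^ k) * (\<alpha> ^ (k * b)) ^ u) = 0"
  proof (intro allI impI)
    fix u assume "u < \<delta> - 1"
    then have "residue_class_sum n \<nu> c (k1 mod \<nu>) (\<beta> (j + u)) = 0"
      using residue_class_sum_zero[OF c] nu_pos by simp
    then show "(\<Sum>k\<in>?K. (c k * \<beta> j ^ k) * (\<alpha> ^ (k * b)) ^ u) = 0"
      by (simp add: residue_class_sum_def beta_add_power mult.assoc)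
  qed
  moreover have "inj_on (\<lambda>k. \<alpha> ^ (k * b)) ?K"
    by (rule inj_on_subset[OF inj_on_primitive_root_power_mult[OF primitive coprime_b_n]]) auto
  ultimately have "\<delta> - 1 < card {k\<in>?K. c k * \<beta> j ^ k \<noteq> 0}"
    using code_support[OF c] k1 beta_nonzero by (intro card_support_gt_of_power_sums_zero) auto
  moreover have "{k\<in>?K. c k * \<beta> j ^ k \<noteq> 0} = {k. k < n \<and> k mod \<nu> = k1 mod \<nu> \<and> c k \<noteq> 0}"
    using beta_nonzero by auto
  ultimately show ?thesis by simp
qed

text \<open>Support of a minimum-weight codeword: the residue classes \<open>0, \<dots>, l - 1\<close> mod \<open>\<nu>\<close> in full
  and the first \<open>i + \<delta>\<close> elements of class \<open>l\<close>.\<close>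
definition "test_support = (\<lambda>(s, m). s + \<nu> * m) ` ({..<l} \<times> {..<R} \<union> {l} \<times> {..<i + \<delta>})"

text \<open>Linear conditions putting a vector supported in \<open>test_support\<close> into the code: the
  exponents below \<open>D\<close> outside the blocks, and the class sums the blocks reduce to (classes beyond
  \<open>l\<close> vanish on \<open>test_support\<close>).\<close>
definition "constraints = Inl ` ({..<D} - block_points {..l}) \<union> Inr ` ({..l} \<times> {..\<delta> - 2})"

definition "constraint x c = (case x of
    Inl M \<Rightarrow> eval_vec n c (\<beta> M)
  | Inr (s, u) \<Rightarrow> residue_class_sum n \<nu> c s (\<beta> (j + u)))"

lemma card_test_support: "card test_support = D + 1"
proof -
  have "inj_on (\<lambda>(s, m). s + \<nu> * m) ({..<l} \<times> {..<R} \<union> {l} \<times> {..<i + \<delta>})"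
    using l_plus_2_le_nu by (intro inj_on_subset[OF inj_on_add_mult]) auto
  then have "card test_support = card ({..<l} \<times> {..<R} \<union> {l} \<times> {..<i + \<delta>})"
    unfolding test_support_def by (rule card_image)
  also have "\<dots> = l * R + (i + \<delta>)" by (subst card_Un_disjoint) auto
  finally show ?thesis using D_plus_1 by simp
qed

lemma test_support_bounds:
  assumes "k \<in> test_support"
  shows "k < n" "k mod \<nu> \<le> l"
proof -
  obtain s m where sm: "k = s + \<nu> * m" "s \<le> l" "m < R"
    using assms i_plus_\<delta>_le_R unfolding test_support_def by auto
  then have "s < \<nu>" using l_plus_2_le_nu by simp
  then have "k < \<nu> * (m + 1)" using sm by simp
  also have "\<dots> \<le> \<nu> * R" using sm by (intro mult_le_mono2) simp
  finally show "k < n" using nu_times_R by simp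
  show "k mod \<nu> \<le> l" using sm \<open>s < \<nu>\<close> by simp
qed

lemma card_constraints: "card constraints \<le> D"
proof -
  have "card (block_points {..l}) \<le> D"
    using card_mono[OF _ block_points_initial_subset] by simp
  have "card constraints \<le> card (Inl ` ({..<D} - block_points {..l}) :: (nat + nat \<times> nat) set)
      + card (Inr ` ({..l} \<times> {..\<delta> - 2}) :: (nat + nat \<times> nat) set)"
    unfolding constraints_def by (rule card_Un_le)
  also have "\<dots> \<le> card ({..<D} - block_points {..l}) + card ({..l} \<times> {..\<delta> - 2})"
    by (intro add_mono card_image_le) auto
  also have "card ({..l} \<times> {..\<delta> - 2}) = card (block_points {..l})"
    unfolding block_points_def by (simp add: card_image[OF inj_on_block_points])
  also have "card ({..<D} - block_points {..l}) = D - card (block_points {..l})"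
    using block_points_initial_subset by (simp add: card_Diff_subset finite_subset)
  finally show ?thesis using \<open>card (block_points {..l}) \<le> D\<close> by simp
qed

lemma constraint_diff: "constraint x (f - g) = constraint x f - constraint x g"
  by (cases x) (auto simp: constraint_def eval_vec_diff residue_class_sum_diff)

lemma constraints_zero_imp_code:
  assumes supp: "\<forall>k. c k \<noteq> 0 \<longrightarrow> k \<in> test_support"
    and zero: "\<forall>x\<in>constraints. constraint x c = 0"
  shows "c \<in> code"
proof -
  have class_sum_zero: "residue_class_sum n \<nu> c s (\<beta> (j + u)) = 0" if "u \<le> \<delta> - 2" for s u
  proof (cases "s \<le> l")
    case True
    then have "Inr (s, u) \<in> constraints" using that unfolding constraints_def by auto
    then show ?thesis using zero by (auto simp: constraint_def)
  next
    case False
    then have "c k = 0" if "k mod \<nu> = s" for k using supp test_support_bounds(2) that by force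
    then show ?thesis unfolding residue_class_sum_def by simp
  qed
  have "eval_vec n c (\<beta> M) = 0" if "M \<in> exponents" for M
  proof (cases "M \<in> {..<D} - block_points {..l}")
    case True
    then have "Inl M \<in> constraints" unfolding constraints_def by blast
    then show ?thesis using zero by (auto simp: constraint_def)
  next
    case False
    with \<open>M \<in> exponents\<close> have "M \<in> block_points {..<\<nu>}" using exponents_subset_Un by blast
    then obtain e u where "u \<le> \<delta> - 2" "M = e * R + j + u"
      unfolding block_points_def by auto
    then show ?thesis using eval_vec_beta_block[of c e "j + u"] by (simp add: add.assoc class_sum_zero)
  qed
  then show "c \<in> code"
    unfolding vanishing_code_def using supp test_support_bounds(1) by (auto simp: not_le[symmetric])
qed

lemma exists_codeword_weight_le:
  "\<exists>c\<in>code. c \<noteq> 0 \<and> card {k. k < n \<and> c k \<noteq> 0} \<le> D + 1"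
proof -
  have "card constraints < card test_support" using card_constraints card_test_support by simp
  then obtain c :: "nat \<Rightarrow> 'a" where "c \<noteq> 0" and supp: "\<forall>k. c k \<noteq> 0 \<longrightarrow> k \<in> test_support"
    and zero: "\<forall>x\<in>constraints. constraint x c = 0"
    using exists_nonzero_common_zero[of test_support constraints constraint] constraint_diff
    by (auto simp: test_support_def constraints_def)
  from supp zero have "c \<in> code" by (rule constraints_zero_imp_code)
  moreover have "card {k. k < n \<and> c k \<noteq> 0} \<le> card test_support"
    using supp by (intro card_mono) (auto simp: test_support_def)
  ultimately show ?thesis using \<open>c \<noteq> 0\<close> card_test_support by auto
qed

lemma min_dist_code: "min_dist n code = D + 1"
  unfolding min_dist_def
proof (rule Min_eqI)
  have "{hamming_dist n x y |x y. x \<in> code \<and> y \<in> code \<and> x \<noteq> y} \<subseteq> {..n}"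
    using hamming_dist_le by blast
  then show "finite {hamming_dist n x y |x y. x \<in> code \<and> y \<in> code \<and> x \<noteq> y}"
    by (rule finite_subset) simp
next
  fix d assume "d \<in> {hamming_dist n x y |x y. x \<in> code \<and> y \<in> code \<and> x \<noteq> y}"
  then obtain x y where xy: "x \<in> code" "y \<in> code" "x \<noteq> y" "d = hamming_dist n x y" by blast
  then have "x - y \<in> code" by (intro vanishing_code_diff)
  moreover have "x - y \<noteq> 0" using xy(3) by simp
  ultimately have "D < card {k. k < n \<and> (x - y) k \<noteq> 0}" by (rule weight_gt_D)
  then show "D + 1 \<le> d" using xy(4) by (simp add: hamming_dist_eq_card_support)
next
  obtain c where c: "c \<in> code" "c \<noteq> 0" "card {k. k < n \<and> c k \<noteq> 0} \<le> D + 1"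
    using exists_codeword_weight_le by blast
  then have "hamming_dist n c 0 = D + 1"
    using weight_gt_D[OF c(1,2)] by (simp add: hamming_dist_eq_card_support)
  moreover have "hamming_dist n c 0 \<in> {hamming_dist n x y |x y. x \<in> code \<and> y \<in> code \<and> x \<noteq> y}"
    using c(1,2) zero_in_vanishing_code by blast
  ultimately show "D + 1 \<in> {hamming_dist n x y |x y. x \<in> code \<and> y \<in> code \<and> x \<noteq> y}"
    by simp
qed

lemma card_residue_class_le: "card {k. k < n \<and> k mod \<nu> = s} \<le> R"
proof -
  have "{k. k < n \<and> k mod \<nu> = s} \<subseteq> (\<lambda>m. s + \<nu> * m) ` {..<R}"
  proof
    fix k assume k: "k \<in> {k. k < n \<and> k mod \<nu> = s}"
    then have "k < \<nu> * R" using nu_times_R by simp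
    then have "k div \<nu> < R" by (simp add: div_less_iff_less_mult nu_pos mult.commute)
    moreover have "k = s + \<nu> * (k div \<nu>)"
      using k mod_mult_div_eq[of k \<nu>] by (metis (mono_tags) mem_Collect_eq)
    ultimately show "k \<in> (\<lambda>m. s + \<nu> * m) ` {..<R}" by blast
  qed
  then have "card {k. k < n \<and> k mod \<nu> = s} \<le> card ((\<lambda>m. s + \<nu> * m) ` {..<R})"
    by (intro card_mono) auto
  also have "\<dots> \<le> R" using card_image_le[of "{..<R}"] by simp
  finally show ?thesis .
qed

lemma min_dist_ge_puncture_residue_class:
  "min_dist_ge n (puncture {k. k < n \<and> k mod \<nu> = s} code) \<delta>"
proof -
  define S where "S = {k. k < n \<and> k mod \<nu> = s}"
  have "\<delta> \<le> hamming_dist n (\<lambda>k. if k \<in> S then c1 k else 0) (\<lambda>k. if k \<in> S then c2 k else 0)"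
    if c: "c1 \<in> code" "c2 \<in> code"
      and ne: "(\<lambda>k. if k \<in> S then c1 k else 0) \<noteq> (\<lambda>k. if k \<in> S then c2 k else 0)" for c1 c2
  proof -
    from ne obtain k1 where "(if k1 \<in> S then c1 k1 else 0) \<noteq> (if k1 \<in> S then c2 k1 else 0)"
      by (auto simp: fun_eq_iff)
    then have "k1 \<in> S" "(c1 - c2) k1 \<noteq> 0" by (cases "k1 \<in> S"; simp)+
    moreover have "c1 - c2 \<in> code" using c by (rule vanishing_code_diff)
    ultimately have "\<delta> \<le> card {k. k < n \<and> k mod \<nu> = k1 mod \<nu> \<and> (c1 - c2) k \<noteq> 0}"
      using residue_class_weight_ge by blast
    also have "{k. k < n \<and> k mod \<nu> = k1 mod \<nu> \<and> (c1 - c2) k \<noteq> 0}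
        = {k. k < n \<and> (if k \<in> S then c1 k else 0) \<noteq> (if k \<in> S then c2 k else 0)}"
      using \<open>k1 \<in> S\<close> by (auto simp: S_def)
    finally show ?thesis unfolding hamming_dist_def .
  qed
  then have "min_dist_ge n (puncture S code) \<delta>"
    unfolding min_dist_ge_def puncture_def by blast
  then show ?thesis unfolding S_def .
qed

lemma is_LRC_code: "is_LRC n code r \<delta>"
  unfolding is_LRC_def has_locality_def
proof (intro allI impI)
  fix k0 assume "k0 < n"
  then show "\<exists>S. S \<subseteq> {0..<n} \<and> k0 \<in> S \<and> card S \<le> r + \<delta> - 1 \<and> min_dist_ge n (puncture S code) \<delta>"
    using card_residue_class_le min_dist_ge_puncture_residue_class unfolding R_def
    by (intro exI[of _ "{k. k < n \<and> k mod \<nu> = k0 mod \<nu>}"]) auto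
qed

lemma i_le: "i \<le> (\<nu> - l) * r"
proof -
  have "1 * r \<le> (\<nu> - l) * r" using l_plus_2_le_nu by (intro mult_le_mono1) simp
  then show ?thesis using i_less_r by linarith
qed

lemma code_dim_code: "code_dim code = (\<nu> - l) * r - i"
proof -
  have "finite exponents" using exponents_subset finite_subset by blast
  moreover have "card exponents \<le> n" using card_mono[OF _ exponents_subset] by simp
  moreover have "card (\<beta> ` exponents) = card exponents"
    using exponents_subset by (intro card_image inj_on_subset[OF inj_on_beta])
  ultimately have "code_dim code = n - card exponents"
    using code_dim_vanishing_code[OF n_pos, of "\<beta> ` exponents"] beta_root by simp
  also have "\<dots> = \<nu> * R - (l * R + i + (\<delta> - 1) + (\<nu> - l - 1) * (\<delta> - 1))"
    unfolding card_exponents D_def nu_times_R using \<delta>_ge_2 by simp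
  also have "\<dots> = (\<nu> - l) * r - i"
    using l_plus_2_le_nu i_less_r \<delta>_ge_2 by (intro nat_dim_identity) (auto simp: R_def)
  finally show ?thesis .
qed

lemma optimal_code: "optimal_LRC n code r \<delta>"
  unfolding optimal_LRC_def
proof (intro conjI is_LRC_code)
  have ceil: "\<lceil>real (code_dim code) / real r\<rceil> = int \<nu> - int l"
    unfolding code_dim_code using i_less_r l_plus_2_le_nu
    by (subst ceiling_diff_div) (auto simp: of_nat_diff)
  have dim: "int (code_dim code) = (int \<nu> - int l) * int r - int i"
    using i_le l_plus_2_le_nu by (simp add: code_dim_code of_nat_diff)
  have R: "int R = int r + int \<delta> - 1" using \<delta>_ge_2 by (simp add: R_def of_nat_diff)
  have n: "int n = int \<nu> * (int r + int \<delta> - 1)" using nu_times_R R by (metis of_nat_mult)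
  have d: "int (min_dist n code) = int l * (int r + int \<delta> - 1) + int i + int \<delta>"
    using \<delta>_ge_2 unfolding min_dist_code D_plus_1 R_def by (simp add: of_nat_diff)
  show "int (min_dist n code) = int n - int (code_dim code)
      - (\<lceil>real (code_dim code) / real r\<rceil> - 1) * (int \<delta> - 1) + 1"
    unfolding ceil dim n d by (simp add: algebra_simps)
qed

end

theorem corollary4p2:
  fixes \<alpha> :: "'a::{finite,field}"
    and n r \<delta> b t i l j :: nat
  assumes hn: "n dvd card (UNIV :: 'a set) - 1"
    and h\<alpha>: "primitive_root_of_unity n \<alpha>"
    and hr: "1 \<le> r" and h\<delta>: "2 \<le> \<delta>"
    and hdiv: "(r + \<delta> - 1) dvd n"
    and hb: "0 < b" and hgcd: "gcd b n = 1"
    and ht: "t \<le> n - 1"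
    and hi: "i \<le> r - 1"
    and hlj: "(l + 3 \<le> n div (r + \<delta> - 1) \<and> j \<le> i) \<or> (l + 2 = n div (r + \<delta> - 1) \<and> j = i)"
  shows "let \<nu> = n div (r + \<delta> - 1);
             B = {\<alpha> ^ (m * b) | m. m \<le> \<delta> - 2};
             A = {\<alpha> ^ (t + m * b) | m. m \<le> l * (r + \<delta> - 1) + i}
                 \<union> {\<alpha> ^ (t + ((l + e) * (r + \<delta> - 1) + j) * b) | e. 1 \<le> e \<and> e \<le> \<nu> - l - 1};
             C = cyclic_code n (set_prod A B)
         in optimal_LRC n C r \<delta>
            \<and> code_dim C = (\<nu> - l) * r - i
            \<and> min_dist n C = \<delta> + i + l * (r + \<delta> - 1)"
proof -
  interpret lrc_construction \<alpha> n r \<delta> b t i l j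
    using h\<alpha> hr h\<delta> hdiv hgcd hi hlj by unfold_locales (auto simp: coprime_iff_gcd_eq_1)
  have "cyclic_code n (\<beta> ` exponents) = code"
    using n_pos exponents_subset beta_root
    by (intro cyclic_code_eq_vanishing_code) (auto intro: finite_subset)
  moreover have "\<delta> + i + l * (r + \<delta> - 1) = D + 1" using D_plus_1 by (simp add: R_def)
  ultimately show ?thesis
    using defining_set_eq optimal_code code_dim_code min_dist_code unfolding Let_def R_def \<nu>_def
    by simp
qed

end
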